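(* For each $0<c<1/2$ the equation $$-jcK\!\left(\tfrac{(c^2-1)(1-j^2)}{c^2}\right)+\tfrac{j}{c}\Pi\!\left(\tfrac{c^2-1}{c^2},\tfrac{(c^2-1)(1-j^2)}{c^2}\right)=\tfrac{\pi}{4}$$ has exactly one solution $j\in[0,1]$.
   Context: For $k,n<1$: $K(k)=\int_0^{\pi/2}(1-k\sin^2\theta)^{-1/2}d\theta$ and $\Pi(n,k)=\int_0^{\pi/2}\frac{d\theta}{(1-n\sin^2\theta)\sqrt{1-k\sin^2\theta}}$. *)

theory Defs
  imports "HOL-Analysis.Analysis"
begin

text \<open>Complete elliptic integrals in the parameter convention of the paper (for k, n < 1).\<close>

definition ellK :: "real \<Rightarrow> real" where
  "ellK k = integral {0..pi/2} (\<lambda>\<theta>. 1 / sqrt (1 - k * (sin \<theta>)^2))"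

definition ellPi :: "real \<Rightarrow> real \<Rightarrow> real" where
  "ellPi n k = integral {0..pi/2}
     (\<lambda>\<theta>. 1 / ((1 - n * (sin \<theta>)^2) * sqrt (1 - k * (sin \<theta>)^2)))"

end

theory Submission
  imports Defs
begin

text \<open>
  With \<open>k = ell_modulus c j\<close> and \<open>n = ell_characteristic c\<close>, the two integrands
  combine into \<open>j / sqrt (1 - k sin\<^sup>2 t)\<close> times the weight
  \<open>c / (c\<^sup>2 cos\<^sup>2 t + sin\<^sup>2 t) - c\<close>, which does not depend on \<open>j\<close> and is positive on
  \<open>]0, \<pi>/2[\<close> for \<open>0 < c < 1\<close>.  Since \<open>k \<le> 0\<close> grows with \<open>j\<close>, the left-hand side is a
  continuous, strictly increasing function of \<open>j \<in> [0, 1]\<close>.  It vanishes at \<open>j = 0\<close>, and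
  at \<open>j = 1\<close>, where \<open>k = 0\<close>, it is the integral of the weight, namely \<open>\<pi>/2 (1 - c)\<close>;
  this exceeds \<open>\<pi>/4\<close> exactly when \<open>c < 1/2\<close>.
\<close>

lemma ex1_eq_if_continuous_strict_mono_on:
  fixes f :: "real \<Rightarrow> real"
  assumes "a \<le> b" "continuous_on {a..b} f" "strict_mono_on {a..b} f" "f a \<le> y" "y \<le> f b"
  shows "\<exists>!x. x \<in> {a..b} \<and> f x = y"
proof -
  obtain x where "a \<le> x" "x \<le> b" "f x = y"
    using IVT'[of f a y b] assms by blast
  then show ?thesis
    using strict_mono_on_eqD[OF assms(3)] by auto
qed

lemma one_minus_mult_sin_sq_pos:
  fixes k t :: real
  assumes "k < 1"
  shows "0 < 1 - k * (sin t)^2"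
proof (cases "k \<le> 0")
  case True
  then have "k * (sin t)^2 \<le> 0" by (simp add: mult_nonpos_nonneg)
  then show ?thesis by linarith
next
  case False
  moreover have "(sin t)^2 \<le> 1"
    by (simp add: abs_square_le_1)
  ultimately have "k * (sin t)^2 \<le> k"
    by (simp add: mult_left_le)
  with assms show ?thesis by linarith
qed

abbreviation ell_modulus :: "real \<Rightarrow> real \<Rightarrow> real" where
  "ell_modulus c j \<equiv> (c^2 - 1) * (1 - j^2) / c^2"

abbreviation ell_characteristic :: "real \<Rightarrow> real" where
  "ell_characteristic c \<equiv> (c^2 - 1) / c^2"

lemma ell_modulus_nonpos:
  fixes c j :: real
  assumes "c^2 \<le> 1" "\<bar>j\<bar> \<le> 1"
  shows "ell_modulus c j \<le> 0"
  using assms by (intro divide_nonpos_nonneg mult_nonpos_nonneg) (auto simp: abs_square_le_1)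

lemma ell_modulus_less_one:
  fixes c j :: real
  assumes "c^2 \<le> 1" "\<bar>j\<bar> \<le> 1"
  shows "ell_modulus c j < 1"
  using ell_modulus_nonpos[OF assms] by linarith

lemma ell_modulus_mono:
  fixes c j1 j2 :: real
  assumes "c^2 \<le> 1" "j1^2 \<le> j2^2"
  shows "ell_modulus c j1 \<le> ell_modulus c j2"
  using assms by (intro divide_right_mono mult_left_mono_neg) auto

lemma cos_sin_quadratic_pos:
  fixes c t :: real
  assumes "c \<noteq> 0"
  shows "0 < c^2 * (cos t)^2 + (sin t)^2"
proof (cases "cos t = 0")
  case True
  then show ?thesis using sin_cos_squared_add[of t] by simp
next
  case False
  then show ?thesis using assms by (simp add: add_pos_nonneg)
qed

lemma one_minus_ell_characteristic:
  fixes c t :: real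
  assumes "c \<noteq> 0"
  shows "1 - ell_characteristic c * (sin t)^2 = (c^2 * (cos t)^2 + (sin t)^2) / c^2"
  using assms by (simp add: field_simps cos_squared_eq)

text \<open>\<open>t + arctan (\<dots>)\<close> is the branch of \<open>arctan (tan t / c)\<close>, the polar angle of
  \<open>(c cos t, sin t)\<close>, that is smooth on all of \<open>\<real>\<close>.\<close>

lemma ellipse_angle_has_real_derivative:
  fixes c t :: real
  assumes "0 < c"
  shows "((\<lambda>t. t + arctan ((1 - c) * sin t * cos t / (c * (cos t)^2 + (sin t)^2)))
          has_real_derivative c / (c^2 * (cos t)^2 + (sin t)^2)) (at t)"
proof -
  define u where "u = (\<lambda>t. (1 - c) * sin t * cos t / (c * (cos t)^2 + (sin t)^2))"
  define E where "E = c * (cos t)^2 + (sin t)^2"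
  define F where "F = c^2 * (cos t)^2 + (sin t)^2"
  have sin_cos: "(sin t)^2 + (cos t)^2 = 1" by simp
  have E: "0 < E"
    unfolding E_def using assms cos_sin_quadratic_pos[of "sqrt c" t] by simp
  have F: "0 < F"
    unfolding F_def using assms cos_sin_quadratic_pos[of c t] by simp
  have "(u has_real_derivative (1 - c) * (c * (cos t)^2 - (sin t)^2) / E^2) (at t)"
    using E unfolding u_def E_def
    by (auto intro!: derivative_eq_intros simp: field_simps power2_eq_square; use sin_cos in algebra)
  then have "((\<lambda>t. t + arctan (u t)) has_real_derivative
      1 + (1 - c) * (c * (cos t)^2 - (sin t)^2) / E^2 / (1 + (u t)^2)) (at t)"
    by (auto intro!: derivative_eq_intros simp: divide_inverse mult_ac)
  moreover have "1 + (u t)^2 = F / E^2"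
  proof -
    have "E^2 + ((1 - c) * sin t * cos t)^2 = F"
      unfolding E_def F_def using sin_cos by algebra
    then show ?thesis
      using E unfolding u_def E_def[symmetric] by (simp add: field_simps)
  qed
  moreover have "1 + (1 - c) * (c * (cos t)^2 - (sin t)^2) / F = c / F"
    using F unfolding F_def by (simp add: field_simps) (use sin_cos in algebra)
  ultimately show ?thesis
    using E F unfolding u_def F_def[symmetric] by simp
qed

lemma has_integral_ellipse_angle:
  fixes c :: real
  assumes "0 < c"
  shows "((\<lambda>t. c / (c^2 * (cos t)^2 + (sin t)^2)) has_integral pi/2) {0..pi/2}"
proof -
  have "((\<lambda>t. c / (c^2 * (cos t)^2 + (sin t)^2)) has_integral
      (\<lambda>t. t + arctan ((1 - c) * sin t * cos t / (c * (cos t)^2 + (sin t)^2))) (pi/2)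
    - (\<lambda>t. t + arctan ((1 - c) * sin t * cos t / (c * (cos t)^2 + (sin t)^2))) 0) {0..pi/2}"
    by (intro fundamental_theorem_of_calculus)
       (auto simp: has_real_derivative_iff_has_vector_derivative[symmetric]
             intro: has_field_derivative_at_within ellipse_angle_has_real_derivative[OF assms])
  then show ?thesis by simp
qed

definition ell_combination :: "real \<Rightarrow> real \<Rightarrow> real" where
  "ell_combination c j =
    - j * c * ellK (ell_modulus c j) + (j / c) * ellPi (ell_characteristic c) (ell_modulus c j)"

definition ell_weight :: "real \<Rightarrow> real \<Rightarrow> real" where
  "ell_weight c t = c / (c^2 * (cos t)^2 + (sin t)^2) - c"

definition ell_kernel :: "real \<Rightarrow> real \<Rightarrow> real \<Rightarrow> real" where
  "ell_kernel c j t = j / sqrt (1 - ell_modulus c j * (sin t)^2) * ell_weight c t"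

lemma ell_combination_integrand_eq:
  fixes c j t :: real
  assumes "c \<noteq> 0" "ell_modulus c j < 1"
  shows "- j * c * (1 / sqrt (1 - ell_modulus c j * (sin t)^2))
      + (j / c) * (1 / ((1 - ell_characteristic c * (sin t)^2)
                        * sqrt (1 - ell_modulus c j * (sin t)^2)))
    = ell_kernel c j t"
proof -
  define S where "S = sqrt (1 - ell_modulus c j * (sin t)^2)"
  define F where "F = c^2 * (cos t)^2 + (sin t)^2"
  have "0 < S"
    unfolding S_def using one_minus_mult_sin_sq_pos[OF assms(2)] by simp
  moreover have "0 < F"
    unfolding F_def using cos_sin_quadratic_pos[OF assms(1)] .
  ultimately have "- j * c * (1 / S) + (j / c) * (1 / (F / c^2 * S)) = j / S * (c / F - c)"
    using assms(1) by (simp add: field_simps power2_eq_square)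
  then show ?thesis
    unfolding one_minus_ell_characteristic[OF assms(1)] ell_kernel_def ell_weight_def
      S_def F_def .
qed

lemma ell_combination_eq_integral:
  fixes c j :: real
  assumes "c \<noteq> 0" "ell_modulus c j < 1"
  shows "ell_combination c j = integral {0..pi/2} (ell_kernel c j)"
proof -
  define f1 where "f1 t = 1 / sqrt (1 - ell_modulus c j * (sin t)^2)" for t
  define f2 where "f2 t = 1 / ((1 - ell_characteristic c * (sin t)^2)
                               * sqrt (1 - ell_modulus c j * (sin t)^2))" for t
  have "ell_characteristic c < 1"
    using assms(1) by (simp add: field_simps)
  then have "1 - ell_characteristic c * (sin t)^2 \<noteq> 0"
      and "sqrt (1 - ell_modulus c j * (sin t)^2) \<noteq> 0" for t
    using one_minus_mult_sin_sq_pos assms(2) by (metis less_irrefl real_sqrt_gt_zero)+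
  then have integrable: "f1 integrable_on {0..pi/2}" "f2 integrable_on {0..pi/2}"
    unfolding f1_def f2_def using assms(1)
    by (auto intro!: integrable_continuous_interval continuous_intros)
  have "ell_combination c j = - j * c * integral {0..pi/2} f1 + (j / c) * integral {0..pi/2} f2"
    unfolding ell_combination_def ellK_def ellPi_def f1_def f2_def ..
  also have "\<dots> = integral {0..pi/2} (\<lambda>t. - j * c * f1 t + (j / c) * f2 t)"
    using integrable by (simp only: integral_add integrable_on_mult_right integral_mult_right)
  also have "\<dots> = integral {0..pi/2} (ell_kernel c j)"
    unfolding f1_def f2_def ell_combination_integrand_eq[OF assms] ..
  finally show ?thesis .
qed

lemma continuous_on_ell_kernel:
  fixes c :: real
  assumes "c \<noteq> 0" "c^2 \<le> 1"
  shows "continuous_on ({-1..1} \<times> UNIV) (\<lambda>(j, t). ell_kernel c j t)"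
proof -
  have "sqrt (1 - ell_modulus c j * (sin t)^2) \<noteq> 0" if "j \<in> {-1..1}" for j t
  proof -
    have "ell_modulus c j < 1"
      using ell_modulus_less_one[OF assms(2)] that by auto
    then show ?thesis using one_minus_mult_sin_sq_pos by (metis less_irrefl real_sqrt_gt_zero)
  qed
  moreover have "c^2 * (cos t)^2 + (sin t)^2 \<noteq> 0" for t
    using cos_sin_quadratic_pos[OF assms(1)] by (metis less_irrefl)
  ultimately show ?thesis
    unfolding ell_kernel_def ell_weight_def case_prod_beta using assms(1)
    by (auto intro!: continuous_intros)
qed

lemma continuous_on_ell_combination:
  fixes c :: real
  assumes "c \<noteq> 0" "c^2 \<le> 1"
  shows "continuous_on {-1..1} (ell_combination c)"
proof -
  have "continuous_on {-1..1} (\<lambda>j. integral (cbox 0 (pi/2)) (ell_kernel c j))"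
    by (rule integral_continuous_on_param, rule continuous_on_subset[OF continuous_on_ell_kernel[OF assms]])
       auto
  moreover have "ell_combination c j = integral (cbox 0 (pi/2)) (ell_kernel c j)"
    if "j \<in> {-1..1}" for j
  proof -
    have "ell_modulus c j < 1"
      using ell_modulus_less_one[OF assms(2)] that by auto
    then show ?thesis using ell_combination_eq_integral assms(1) by simp
  qed
  ultimately show ?thesis by (metis (no_types, lifting) continuous_on_cong)
qed

lemma ell_weight_pos:
  fixes c t :: real
  assumes "0 < c" "c < 1" "cos t \<noteq> 0"
  shows "0 < ell_weight c t"
proof -
  have "c^2 * (cos t)^2 + (sin t)^2 = 1 - (1 - c^2) * (cos t)^2"
    by (simp add: sin_squared_eq algebra_simps)
  also have "\<dots> < 1"
    using assms by (simp add: power_less_one_iff)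
  finally have "c < c / (c^2 * (cos t)^2 + (sin t)^2)"
    using assms(1) cos_sin_quadratic_pos[of c t] by (simp add: less_divide_eq)
  then show ?thesis
    unfolding ell_weight_def by simp
qed

lemma ell_kernel_strict_mono:
  fixes c j1 j2 t :: real
  assumes "c^2 \<le> 1" "0 \<le> j1" "j1 < j2" "j2 \<le> 1" "0 < ell_weight c t"
  shows "ell_kernel c j1 t < ell_kernel c j2 t"
proof -
  define S1 where "S1 = sqrt (1 - ell_modulus c j1 * (sin t)^2)"
  define S2 where "S2 = sqrt (1 - ell_modulus c j2 * (sin t)^2)"
  have "ell_modulus c j2 < 1"
    using ell_modulus_less_one[OF assms(1), of j2] assms(2-4) by auto
  then have "0 < S2"
    unfolding S2_def by (intro real_sqrt_gt_zero one_minus_mult_sin_sq_pos)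
  have "j1^2 \<le> j2^2"
    using assms(2,3) by (simp add: power_mono)
  then have "ell_modulus c j1 * (sin t)^2 \<le> ell_modulus c j2 * (sin t)^2"
    by (intro mult_right_mono ell_modulus_mono[OF assms(1)]) simp_all
  then have "S2 \<le> S1"
    unfolding S1_def S2_def by (intro real_sqrt_le_mono) linarith
  then have "j1 / S1 \<le> j1 / S2"
    using \<open>0 < S2\<close> assms(2) by (simp add: divide_left_mono)
  also have "\<dots> < j2 / S2"
    using \<open>0 < S2\<close> assms(3) by (simp add: divide_strict_right_mono)
  finally have "j1 / S1 * ell_weight c t < j2 / S2 * ell_weight c t"
    using assms(5) by (rule mult_strict_right_mono)
  then show ?thesis
    unfolding ell_kernel_def S1_def S2_def .
qed

lemma strict_mono_on_ell_combination:
  fixes c :: real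
  assumes "0 < c" "c < 1"
  shows "strict_mono_on {0..1} (ell_combination c)"
proof (rule strict_mono_onI)
  fix j1 j2 :: real
  assume j: "j1 \<in> {0..1}" "j2 \<in> {0..1}" "j1 < j2"
  have c: "c \<noteq> 0" "c^2 \<le> 1"
    using assms by (auto simp: power_le_one)
  have modulus: "ell_modulus c j < 1" if "j \<in> {0..1}" for j
    using ell_modulus_less_one[OF c(2), of j] that by auto
  have continuous: "continuous_on {0..pi/2} (ell_kernel c j)" if "j \<in> {0..1}" for j
  proof -
    have "continuous_on {0..pi/2} ((\<lambda>(j, t). ell_kernel c j t) \<circ> Pair j)"
      by (rule continuous_on_compose[OF _ continuous_on_subset[OF continuous_on_ell_kernel[OF c]]])
         (use that in \<open>auto intro!: continuous_intros\<close>)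
    then show ?thesis by (simp add: o_def)
  qed
  have "integral {0..pi/2} (ell_kernel c j1) < integral {0..pi/2} (ell_kernel c j2)"
  proof (rule integral_less_real)
    show "{0<..<pi/2} \<noteq> {}"
      using pi_gt_zero by (simp add: not_le)
  next
    fix t :: real
    assume "t \<in> {0<..<pi/2}"
    then have "cos t \<noteq> 0" using cos_gt_zero_pi[of t] by auto
    then show "ell_kernel c j1 t < ell_kernel c j2 t"
      using ell_kernel_strict_mono[OF c(2)] ell_weight_pos[OF assms] j by auto
  qed (use continuous j in auto)
  then show "ell_combination c j1 < ell_combination c j2"
    using ell_combination_eq_integral[OF c(1) modulus] j by simp
qed

lemma ell_combination_zero: "ell_combination c 0 = 0"
  by (simp add: ell_combination_def)

lemma ell_combination_one:
  fixes c :: real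
  assumes "0 < c"
  shows "ell_combination c 1 = pi/2 * (1 - c)"
proof -
  have "(ell_weight c has_integral pi/2 - pi/2 * c) {0..pi/2}"
    unfolding ell_weight_def
    using has_integral_diff[OF has_integral_ellipse_angle[OF assms]
                               has_integral_const_real[of c 0 "pi/2"]]
    by simp
  moreover have "ell_kernel c 1 = ell_weight c"
    by (simp add: ell_kernel_def fun_eq_iff)
  ultimately have "integral {0..pi/2} (ell_kernel c 1) = pi/2 * (1 - c)"
    by (simp add: integral_unique algebra_simps)
  then show ?thesis
    using ell_combination_eq_integral[of c 1] assms by simp
qed

theorem mainTheorem8:
  fixes c :: real
  assumes "0 < c" and "c < 1/2"
  shows "\<exists>!j. j \<in> {0..1} \<and>
    - j * c * ellK ((c^2 - 1) * (1 - j^2) / c^2)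
    + (j / c) * ellPi ((c^2 - 1) / c^2) ((c^2 - 1) * (1 - j^2) / c^2) = pi / 4"
proof -
  have c: "0 < c" "c < 1" "c^2 \<le> 1"
    using assms by (auto simp: power_le_one)
  have "\<exists>!j. j \<in> {0..1} \<and> ell_combination c j = pi / 4"
  proof (rule ex1_eq_if_continuous_strict_mono_on)
    show "continuous_on {0..1} (ell_combination c)"
      using continuous_on_ell_combination[of c] c by (auto elim: continuous_on_subset)
    show "strict_mono_on {0..1} (ell_combination c)"
      using strict_mono_on_ell_combination c by blast
    show "ell_combination c 0 \<le> pi / 4"
      by (simp add: ell_combination_zero)
    have "pi / 2 * (1 / 2) \<le> pi / 2 * (1 - c)"
      using assms(2) pi_gt_zero by (intro mult_left_mono) auto
    then show "pi / 4 \<le> ell_combination c 1"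
      using ell_combination_one[OF c(1)] by linarith
  qed simp
  then show ?thesis
    unfolding ell_combination_def .
qed

end
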